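(* Let $\nu:S\setminus\{0\}\to C$ and $\nu':S\setminus\{0\}\to C'$ be injective (not necessarily well-ordered) valuations on a $\Bbbk$-vector space $S$, and suppose there is a basis $\mathbf B$ of $S$ adapted to both $\nu$ and $\nu'$. Then for every $a\in C_\nu:=\nu(S\setminus\{0\})$ the minimum $\min\{\nu'(x):x\in S\setminus\{0\},\ \nu(x)=a\}$ exists, and the assignment $a\mapsto$ this minimum defines a bijection $\mathbf K_{\nu',\nu}:C_\nu\to C_{\nu'}:=\nu'(S\setminus\{0\})$ such that $\nu'(b)=\mathbf K_{\nu',\nu}(\nu(b))$ for every basis $\mathbf B$ adapted to both valuations and every $b\in\mathbf B$.
   Context: A valuation on a $\Bbbk$-vector space $S$ with values in a totally ordered set $(C,\le)$ is a map $\nu:S\setminus\{0\}\to C$ such that $\nu(cx)=\nu(x)$ for all $c\in\Bbbk^\times$, $x\ne0$, and $\nu(x+y)\le\max(\nu(x),\nu(y))$ whenever $x,y,x+y\neq 0$. It is injective if there is a basis $\mathbf B$ of $S$ such that $\nu|_{\mathbf B}$ is injective; such a basis is called adapted to $\nu$. *)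

theory Defs
  imports Complex_Main
begin

text \<open>The vector space S is the whole type 'v, with scalar multiplication
  scale over a field 'k (assumed to satisfy the vector_space locale).  The value of nu at 0 is irrelevant.\<close>

definition valuation :: "('k::field \<Rightarrow> 'v::ab_group_add \<Rightarrow> 'v) \<Rightarrow> ('v \<Rightarrow> 'c::linorder) \<Rightarrow> bool" where
  "valuation scale \<nu> \<longleftrightarrow>
     (\<forall>c x. c \<noteq> 0 \<and> x \<noteq> 0 \<longrightarrow> \<nu> (scale c x) = \<nu> x) \<and>
     (\<forall>x y. x \<noteq> 0 \<and> y \<noteq> 0 \<and> x + y \<noteq> 0 \<longrightarrow> \<nu> (x + y) \<le> max (\<nu> x) (\<nu> y))"

definition is_basis :: "('k::field \<Rightarrow> 'v::ab_group_add \<Rightarrow> 'v) \<Rightarrow> 'v set \<Rightarrow> bool" where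
  "is_basis scale B \<longleftrightarrow> \<not> module.dependent scale B \<and> module.span scale B = UNIV"

definition adapted_basis :: "('k::field \<Rightarrow> 'v::ab_group_add \<Rightarrow> 'v) \<Rightarrow> ('v \<Rightarrow> 'c) \<Rightarrow> 'v set \<Rightarrow> bool" where
  "adapted_basis scale \<nu> B \<longleftrightarrow> is_basis scale B \<and> inj_on \<nu> B"

definition injective_valuation :: "('k::field \<Rightarrow> 'v::ab_group_add \<Rightarrow> 'v) \<Rightarrow> ('v \<Rightarrow> 'c::linorder) \<Rightarrow> bool" where
  "injective_valuation scale \<nu> \<longleftrightarrow> valuation scale \<nu> \<and> (\<exists>B. adapted_basis scale \<nu> B)"

end

theory Submission
  imports Defs
begin

text \<open>In a basis on which \<nu> is injective, the summands of x have pairwise distinct values,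
  so \<nu> x is the largest value of a basis vector in the support of x; that vector is the
  unique basis vector with value \<nu> x.  Hence, for a basis adapted to both \<nu> and \<nu>', any
  x with \<nu> x = \<nu> b has b in its support, so \<nu>' x \<ge> \<nu>' b.  Thus the minimum is \<nu>' b, and
  \<nu> b \<mapsto> \<nu>' b is a bijection because both valuations take all their values on the basis.\<close>

definition value_correspondence :: "('v::zero \<Rightarrow> 'c) \<Rightarrow> ('v \<Rightarrow> 'd::linorder) \<Rightarrow> 'c \<Rightarrow> 'd" where
  "value_correspondence \<nu> \<nu>' a = (LEAST m. m \<in> {\<nu>' x | x. x \<noteq> 0 \<and> \<nu> x = a})"

context vector_space
begin

lemma valuation_uminus:
  assumes "valuation scale \<nu>" "x \<noteq> 0"
  shows "\<nu> (- x) = \<nu> x"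
proof -
  have "- x = (-1) *s x" by simp
  with assms show ?thesis
    unfolding valuation_def by (metis neg_equal_0_iff_equal one_neq_zero)
qed

lemma valuation_add_eq_max:
  assumes v: "valuation scale \<nu>" and u: "u \<noteq> 0" and w: "w \<noteq> 0" and ne: "\<nu> u \<noteq> \<nu> w"
  shows "u + w \<noteq> 0" "\<nu> (u + w) = max (\<nu> u) (\<nu> w)"
proof -
  show uw: "u + w \<noteq> 0"
  proof
    assume "u + w = 0"
    then have "u = - w" by (simp add: eq_neg_iff_add_eq_0)
    then show False using valuation_uminus[OF v w] ne by simp
  qed
  have ultra: "\<nu> (x + y) \<le> max (\<nu> x) (\<nu> y)" if "x \<noteq> 0" "y \<noteq> 0" "x + y \<noteq> 0" for x y
    using v that unfolding valuation_def by blast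
  have le: "\<nu> (u + w) \<le> max (\<nu> u) (\<nu> w)" using ultra u w uw .
  have ge_u: "\<nu> u \<le> max (\<nu> (u + w)) (\<nu> w)"
    using ultra[of "u + w" "- w"] uw w u valuation_uminus[OF v w] by simp
  have ge_w: "\<nu> w \<le> max (\<nu> (u + w)) (\<nu> u)"
    using ultra[of "u + w" "- u"] uw w u valuation_uminus[OF v u] by simp
  show "\<nu> (u + w) = max (\<nu> u) (\<nu> w)" using le ge_u ge_w ne by (auto simp: max_def split: if_splits)
qed

lemma valuation_sum_distinct_values:
  assumes v: "valuation scale \<nu>" and "finite F" "F \<noteq> {}"
    and inj: "inj_on \<nu> F" and "0 \<notin> F" and "\<forall>b\<in>F. c b \<noteq> 0"
  shows "(\<Sum>b\<in>F. c b *s b) \<noteq> 0 \<and> \<nu> (\<Sum>b\<in>F. c b *s b) = Max (\<nu> ` F)"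
  using assms(2-)
proof (induction F rule: finite_ne_induct)
  case (singleton x)
  then show ?case using v unfolding valuation_def by auto
next
  case (insert x F)
  have cx: "c x *s x \<noteq> 0" "\<nu> (c x *s x) = \<nu> x"
    using insert v unfolding valuation_def by auto
  have IH: "(\<Sum>b\<in>F. c b *s b) \<noteq> 0" "\<nu> (\<Sum>b\<in>F. c b *s b) = Max (\<nu> ` F)"
    using insert by auto
  have "Max (\<nu> ` F) \<in> \<nu> ` F" using insert by simp
  then obtain y where y: "y \<in> F" "\<nu> y = Max (\<nu> ` F)" by auto
  have "\<nu> x \<noteq> \<nu> y" using insert.prems(1) insert.hyps y(1) by auto
  then have "\<nu> (c x *s x) \<noteq> \<nu> (\<Sum>b\<in>F. c b *s b)" using cx IH y by simp
  note sum_max = valuation_add_eq_max[OF v cx(1) IH(1) this]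
  have sum_insert: "(\<Sum>b\<in>insert x F. c b *s b) = c x *s x + (\<Sum>b\<in>F. c b *s b)"
    by (rule sum.insert[OF insert.hyps(1,3)])
  have Max_insert: "Max (\<nu> ` insert x F) = max (\<nu> x) (Max (\<nu> ` F))"
    using insert.hyps(1,2) by simp
  show ?case
  proof
    show "(\<Sum>b\<in>insert x F. c b *s b) \<noteq> 0" unfolding sum_insert by (rule sum_max(1))
    have "\<nu> (\<Sum>b\<in>insert x F. c b *s b) = max (\<nu> (c x *s x)) (\<nu> (\<Sum>b\<in>F. c b *s b))"
      unfolding sum_insert by (rule sum_max(2))
    also have "\<dots> = Max (\<nu> ` insert x F)" unfolding Max_insert cx(2) IH(2) ..
    finally show "\<nu> (\<Sum>b\<in>insert x F. c b *s b) = Max (\<nu> ` insert x F)" .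
  qed
qed

lemma valuation_eq_Max_support:
  assumes v: "valuation scale \<nu>" and B: "is_basis scale B" and inj: "inj_on \<nu> B" and x: "x \<noteq> 0"
  defines "F \<equiv> {b. representation B x b \<noteq> 0}"
  shows "finite F" "F \<noteq> {}" "F \<subseteq> B" "\<nu> x = Max (\<nu> ` F)"
proof -
  have ind: "\<not> dependent B" and sp: "span B = UNIV" using B unfolding is_basis_def by auto
  show fin: "finite F" unfolding F_def by (rule finite_representation)
  show sub: "F \<subseteq> B" unfolding F_def using representation_ne_zero by auto
  have sum_eq: "(\<Sum>b\<in>F. representation B x b *s b) = x"
    unfolding F_def using sum_nonzero_representation_eq[of B x] ind sp by auto
  show ne: "F \<noteq> {}" using sum_eq x by auto
  have F0: "0 \<notin> F" using sub ind dependent_zero by auto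
  have coeffs: "\<forall>b\<in>F. representation B x b \<noteq> 0" by (simp add: F_def)
  show "\<nu> x = Max (\<nu> ` F)"
    using valuation_sum_distinct_values[OF v fin ne inj_on_subset[OF inj sub] F0 coeffs] sum_eq
    by simp
qed

lemma basis_vector_in_support_with_value:
  assumes v: "valuation scale \<nu>" and B: "is_basis scale B" and inj: "inj_on \<nu> B" and x: "x \<noteq> 0"
  obtains b where "b \<in> B" "representation B x b \<noteq> 0" "\<nu> b = \<nu> x"
proof -
  note supp = valuation_eq_Max_support[OF v B inj x]
  have "Max (\<nu> ` {b. representation B x b \<noteq> 0}) \<in> \<nu> ` {b. representation B x b \<noteq> 0}"
    using supp(1,2) by simp
  then obtain b where "b \<in> {b. representation B x b \<noteq> 0}" "\<nu> b = Max (\<nu> ` {b. representation B x b \<noteq> 0})"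
    by auto
  then show ?thesis using that supp(3,4) by auto
qed

lemma valuation_image_eq_basis_image:
  assumes v: "valuation scale \<nu>" and B: "is_basis scale B" and inj: "inj_on \<nu> B"
  shows "\<nu> ` (UNIV - {0}) = \<nu> ` B"
proof
  show "\<nu> ` B \<subseteq> \<nu> ` (UNIV - {0})"
    using B dependent_zero unfolding is_basis_def by auto
  show "\<nu> ` (UNIV - {0}) \<subseteq> \<nu> ` B"
  proof
    fix a assume "a \<in> \<nu> ` (UNIV - {0})"
    then obtain x where x: "x \<noteq> 0" "a = \<nu> x" by blast
    obtain b where "b \<in> B" "\<nu> b = \<nu> x"
      using basis_vector_in_support_with_value[OF v B inj x(1)] by blast
    then show "a \<in> \<nu> ` B" using x(2) by (blast intro: image_eqI[OF sym])
  qed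
qed

lemma common_adapted_basis_value_le:
  fixes \<nu> :: "'b \<Rightarrow> 'c::linorder" and \<nu>' :: "'b \<Rightarrow> 'd::linorder"
  assumes v: "valuation scale \<nu>" and v': "valuation scale \<nu>'" and B: "is_basis scale B"
    and inj: "inj_on \<nu> B" and inj': "inj_on \<nu>' B"
    and b: "b \<in> B" and x: "x \<noteq> 0" "\<nu> x = \<nu> b"
  shows "\<nu>' b \<le> \<nu>' x"
proof -
  obtain b' where b': "b' \<in> B" "representation B x b' \<noteq> 0" "\<nu> b' = \<nu> x"
    using basis_vector_in_support_with_value[OF v B inj x(1)] .
  have "b' = b" using inj b'(1,3) b x(2) by (metis inj_onD)
  then have "b \<in> {b. representation B x b \<noteq> 0}" using b' by simp
  then show ?thesis
    using valuation_eq_Max_support[OF v' B inj' x(1)] by simp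
qed

lemma fibre_min_at_basis_vector:
  fixes \<nu> :: "'b \<Rightarrow> 'c::linorder" and \<nu>' :: "'b \<Rightarrow> 'd::linorder"
  assumes "valuation scale \<nu>" "valuation scale \<nu>'" and B: "is_basis scale B"
    and "inj_on \<nu> B" "inj_on \<nu>' B" and b: "b \<in> B"
  shows "\<nu>' b \<in> {\<nu>' x | x. x \<noteq> 0 \<and> \<nu> x = \<nu> b}"
    and "\<forall>m \<in> {\<nu>' x | x. x \<noteq> 0 \<and> \<nu> x = \<nu> b}. \<nu>' b \<le> m"
proof -
  have "b \<noteq> 0" using B b dependent_zero unfolding is_basis_def by blast
  then show "\<nu>' b \<in> {\<nu>' x | x. x \<noteq> 0 \<and> \<nu> x = \<nu> b}" by blast
  show "\<forall>m \<in> {\<nu>' x | x. x \<noteq> 0 \<and> \<nu> x = \<nu> b}. \<nu>' b \<le> m"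
    using common_adapted_basis_value_le[OF assms] by blast
qed

lemma value_correspondence_basis:
  fixes \<nu> :: "'b \<Rightarrow> 'c::linorder" and \<nu>' :: "'b \<Rightarrow> 'd::linorder"
  assumes "valuation scale \<nu>" "valuation scale \<nu>'" "is_basis scale B"
    and "inj_on \<nu> B" "inj_on \<nu>' B" "b \<in> B"
  shows "value_correspondence \<nu> \<nu>' (\<nu> b) = \<nu>' b"
  unfolding value_correspondence_def
  using fibre_min_at_basis_vector[OF assms] by (intro Least_equality) auto

lemma valuation_fibre_has_min:
  fixes \<nu> :: "'b \<Rightarrow> 'c::linorder" and \<nu>' :: "'b \<Rightarrow> 'd::linorder"
  assumes v: "valuation scale \<nu>" and v': "valuation scale \<nu>'" and B: "is_basis scale B"
    and inj: "inj_on \<nu> B" and inj': "inj_on \<nu>' B" and a: "a \<in> \<nu> ` (UNIV - {0})"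
  shows "\<exists>m \<in> {\<nu>' x | x. x \<noteq> 0 \<and> \<nu> x = a}. \<forall>m' \<in> {\<nu>' x | x. x \<noteq> 0 \<and> \<nu> x = a}. m \<le> m'"
proof -
  obtain b where "b \<in> B" "a = \<nu> b"
    using a unfolding valuation_image_eq_basis_image[OF v B inj] by blast
  with fibre_min_at_basis_vector[OF v v' B inj inj' this(1)] show ?thesis by blast
qed

lemma bij_betw_value_correspondence:
  fixes \<nu> :: "'b \<Rightarrow> 'c::linorder" and \<nu>' :: "'b \<Rightarrow> 'd::linorder"
  assumes v: "valuation scale \<nu>" and v': "valuation scale \<nu>'" and B: "is_basis scale B"
    and inj: "inj_on \<nu> B" and inj': "inj_on \<nu>' B"
  shows "bij_betw (value_correspondence \<nu> \<nu>') (\<nu> ` (UNIV - {0})) (\<nu>' ` (UNIV - {0}))"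
  unfolding valuation_image_eq_basis_image[OF v B inj] valuation_image_eq_basis_image[OF v' B inj']
proof (rule bij_betw_imageI)
  note K_basis = value_correspondence_basis[OF v v' B inj inj']
  show "inj_on (value_correspondence \<nu> \<nu>') (\<nu> ` B)"
    using K_basis inj' by (auto simp: inj_on_def)
  show "value_correspondence \<nu> \<nu>' ` \<nu> ` B = \<nu>' ` B"
    using K_basis by (simp add: image_image)
qed

end

theorem mainTheorem5:
  fixes scale :: "'k::field \<Rightarrow> 'v::ab_group_add \<Rightarrow> 'v"
    and \<nu> :: "'v \<Rightarrow> 'c::linorder" and \<nu>' :: "'v \<Rightarrow> 'd::linorder"
  assumes "vector_space scale"
    and "injective_valuation scale \<nu>"
    and "injective_valuation scale \<nu>'"
    and "\<exists>B. adapted_basis scale \<nu> B \<and> adapted_basis scale \<nu>' B"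
  shows "(\<forall>a \<in> \<nu> ` (UNIV - {0}). \<exists>m \<in> {\<nu>' x | x. x \<noteq> 0 \<and> \<nu> x = a}.
            \<forall>m' \<in> {\<nu>' x | x. x \<noteq> 0 \<and> \<nu> x = a}. m \<le> m')
       \<and> (let K = (\<lambda>a. LEAST m. m \<in> {\<nu>' x | x. x \<noteq> 0 \<and> \<nu> x = a}) in
           bij_betw K (\<nu> ` (UNIV - {0})) (\<nu>' ` (UNIV - {0}))
           \<and> (\<forall>B. adapted_basis scale \<nu> B \<and> adapted_basis scale \<nu>' B \<longrightarrow>
                 (\<forall>b \<in> B. \<nu>' b = K (\<nu> b))))"
proof -
  interpret vector_space scale by fact
  have v: "valuation scale \<nu>" and v': "valuation scale \<nu>'"
    using assms(2,3) unfolding injective_valuation_def by auto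
  obtain B where B: "is_basis scale B" and inj: "inj_on \<nu> B" and inj': "inj_on \<nu>' B"
    using assms(4) unfolding adapted_basis_def by auto
  have "\<forall>B'. adapted_basis scale \<nu> B' \<and> adapted_basis scale \<nu>' B' \<longrightarrow>
          (\<forall>b \<in> B'. \<nu>' b = value_correspondence \<nu> \<nu>' (\<nu> b))"
    using value_correspondence_basis[OF v v'] unfolding adapted_basis_def by auto
  with valuation_fibre_has_min[OF v v' B inj inj'] bij_betw_value_correspondence[OF v v' B inj inj']
  show ?thesis
    unfolding Let_def value_correspondence_def[abs_def] by blast
qed

end
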